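(* For any basic categorized domain with $p\geq 2$, any strategy-proof, non-bossy, and category-wise neutral allocation mechanism is Pareto optimal.
   Context: Basic categorized domain: $n$ agents $\{1,\ldots,n\}$, $p$ categories $D_i=\{1,\ldots,n\}$ of indivisible items, bundles $\mathfrak D=D_1\times\cdots\times D_p$, $[\vec d]_i$ the $i$-th component. Each agent $j$ has a linear order $R_j$ over $\mathfrak D$; a profile is $P=(R_1,\ldots,R_n)$ and $(R_j',R_{-j})$ replaces $R_j$ by $R_j'$. An allocation is a map $A:\{1,\ldots,n\}\to\mathfrak D$ with $\{[A(1)]_i,\ldots,[A(n)]_i\}=D_i$ for each $i$. An allocation mechanism $f$ maps profiles to allocations; $f^j(P)$ is agent $j$'s bundle. Strategy-proofness: for all $P,j,R_j'$, $f^j(P)$ is ranked weakly above $f^j(R_j',R_{-j})$ in $R_j$. Non-bossiness: for all $P,j,R_j'$, if $f^j(P)=f^j(R_j',R_{-j})$ then $f(P)=f(R_j',R_{-j})$. Category-wise neutrality: for all $P$, categories $i$ and permutations $M_i$ of $D_i$, $f(M_i(P))=M_i(f(P))$, where $M_i(\vec d)=(M_i([\vec d]_i),[\vec d]_{-i})$ on bundles, extended to linear orders by relabeling bundles, to profiles componentwise, and to allocations by applying it to each agent's bundle. Pareto optimality: for every profile $P$ there is no allocation $A$ such that every agent $j$ ranks $A(j)$ weakly above $f^j(P)$ in $R_j$ and at least one agent ranks $A(j)$ strictly above $f^j(P)$. *)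

theory Defs
  imports Main
begin

text \<open>Agents are 1..n; categories are 1..p; each category D_i = {1..n}.
  A bdl is a function from categories to items, extensional (undefined)
  outside the categories.\<close>

type_synonym bdl = "nat \<Rightarrow> nat"
(* (x,y) in R means: y is ranked weakly above x *)
type_synonym pref = "(bdl \<times> bdl) set"
type_synonym profile = "nat \<Rightarrow> pref"
type_synonym allocation = "nat \<Rightarrow> bdl"
type_synonym mechanism = "profile \<Rightarrow> allocation"

definition agents :: "nat \<Rightarrow> nat set" where
  "agents n = {1..n}"

definition categories :: "nat \<Rightarrow> nat set" where
  "categories p = {1..p}"

definition bundles :: "nat \<Rightarrow> nat \<Rightarrow> bdl set" where
  "bundles n p = {d. (\<forall>i\<in>categories p. d i \<in> {1..n}) \<and> (\<forall>i. i \<notin> categories p \<longrightarrow> d i = undefined)}"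

definition weakly_above :: "pref \<Rightarrow> bdl \<Rightarrow> bdl \<Rightarrow> bool" where
  "weakly_above R a b \<longleftrightarrow> (b, a) \<in> R"

definition strictly_above :: "pref \<Rightarrow> bdl \<Rightarrow> bdl \<Rightarrow> bool" where
  "strictly_above R a b \<longleftrightarrow> (b, a) \<in> R \<and> a \<noteq> b"

definition is_pref :: "nat \<Rightarrow> nat \<Rightarrow> pref \<Rightarrow> bool" where
  "is_pref n p R \<longleftrightarrow> linear_order_on (bundles n p) R \<and> R \<subseteq> bundles n p \<times> bundles n p"

definition is_profile :: "nat \<Rightarrow> nat \<Rightarrow> profile \<Rightarrow> bool" where
  "is_profile n p P \<longleftrightarrow> (\<forall>j\<in>agents n. is_pref n p (P j)) \<and> (\<forall>j. j \<notin> agents n \<longrightarrow> P j = {})"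

definition is_allocation :: "nat \<Rightarrow> nat \<Rightarrow> allocation \<Rightarrow> bool" where
  "is_allocation n p A \<longleftrightarrow> (\<forall>j\<in>agents n. A j \<in> bundles n p)
     \<and> (\<forall>j. j \<notin> agents n \<longrightarrow> A j = undefined)
     \<and> (\<forall>i\<in>categories p. (\<lambda>j. A j i) ` agents n = {1..n})"

definition is_mechanism :: "nat \<Rightarrow> nat \<Rightarrow> mechanism \<Rightarrow> bool" where
  "is_mechanism n p f \<longleftrightarrow> (\<forall>P. is_profile n p P \<longrightarrow> is_allocation n p (f P))"

definition strategy_proof :: "nat \<Rightarrow> nat \<Rightarrow> mechanism \<Rightarrow> bool" where
  "strategy_proof n p f \<longleftrightarrow>
     (\<forall>P j R'. is_profile n p P \<longrightarrow> j \<in> agents n \<longrightarrow> is_pref n p R' \<longrightarrow>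
        weakly_above (P j) (f P j) (f (P(j := R')) j))"

definition non_bossy :: "nat \<Rightarrow> nat \<Rightarrow> mechanism \<Rightarrow> bool" where
  "non_bossy n p f \<longleftrightarrow>
     (\<forall>P j R'. is_profile n p P \<longrightarrow> j \<in> agents n \<longrightarrow> is_pref n p R' \<longrightarrow>
        f P j = f (P(j := R')) j \<longrightarrow> f P = f (P(j := R')))"

definition perm_bundle :: "nat \<Rightarrow> (nat \<Rightarrow> nat) \<Rightarrow> bdl \<Rightarrow> bdl" where
  "perm_bundle i M d = d(i := M (d i))"

definition perm_pref :: "nat \<Rightarrow> (nat \<Rightarrow> nat) \<Rightarrow> pref \<Rightarrow> pref" where
  "perm_pref i M R = (\<lambda>(x, y). (perm_bundle i M x, perm_bundle i M y)) ` R"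

definition perm_profile :: "nat \<Rightarrow> nat \<Rightarrow> (nat \<Rightarrow> nat) \<Rightarrow> profile \<Rightarrow> profile" where
  "perm_profile n i M P = (\<lambda>j. if j \<in> agents n then perm_pref i M (P j) else P j)"

definition perm_alloc :: "nat \<Rightarrow> nat \<Rightarrow> (nat \<Rightarrow> nat) \<Rightarrow> allocation \<Rightarrow> allocation" where
  "perm_alloc n i M A = (\<lambda>j. if j \<in> agents n then perm_bundle i M (A j) else A j)"

definition category_neutral :: "nat \<Rightarrow> nat \<Rightarrow> mechanism \<Rightarrow> bool" where
  "category_neutral n p f \<longleftrightarrow>
     (\<forall>P i M. is_profile n p P \<longrightarrow> i \<in> categories p \<longrightarrow> bij_betw M {1..n} {1..n} \<longrightarrow>
        f (perm_profile n i M P) = perm_alloc n i M (f P))"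

definition pareto_optimal :: "nat \<Rightarrow> nat \<Rightarrow> mechanism \<Rightarrow> bool" where
  "pareto_optimal n p f \<longleftrightarrow>
     (\<forall>P. is_profile n p P \<longrightarrow>
        \<not> (\<exists>A. is_allocation n p A
              \<and> (\<forall>j\<in>agents n. weakly_above (P j) (A j) (f P j))
              \<and> (\<exists>j\<in>agents n. strictly_above (P j) (A j) (f P j))))"

end

theory Submission imports Defs begin

text \<open>
  Strategy-proofness and non-bossiness make the mechanism Maskin monotonic: if an agent's
  new preference ranks no bundle above her current assignment that was not above it before,
  the allocation does not change. Suppose an allocation A Pareto dominates B = f P, and let
  P' be P with each agent's bundle under A lifted to the top. Monotonicity carries f P = B
  over to f P' = B. Category-wise neutrality, applied category by category with relabelings
  that move the current allocation onto A, gives a profile Q with f Q = A; since A is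
  top-ranked in P', monotonicity also carries f Q = A over to f P' = A. Hence A = B.
  The argument does not use the hypothesis p \<ge> 2.
\<close>

lemma is_pref_iff:
  "is_pref n p R \<longleftrightarrow> R \<subseteq> bundles n p \<times> bundles n p \<and> (\<forall>x\<in>bundles n p. (x, x) \<in> R)
     \<and> trans R \<and> antisym R \<and> total_on (bundles n p) R"
  unfolding is_pref_def linear_order_on_def partial_order_on_def preorder_on_def refl_on_def
  by blast

lemma finite_agents: "finite (agents n)"
  unfolding agents_def by simp

lemma is_profile_pref: "is_profile n p P \<Longrightarrow> j \<in> agents n \<Longrightarrow> is_pref n p (P j)"
  unfolding is_profile_def by blast

lemma is_profile_upd:
  "is_profile n p P \<Longrightarrow> j \<in> agents n \<Longrightarrow> is_pref n p R \<Longrightarrow> is_profile n p (P(j := R))"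
  unfolding is_profile_def by auto

lemma is_allocation_bundle: "is_allocation n p A \<Longrightarrow> j \<in> agents n \<Longrightarrow> A j \<in> bundles n p"
  unfolding is_allocation_def by blast

lemma allocation_eqI:
  assumes "is_allocation n p A" "is_allocation n p B"
    and "\<And>k c. k \<in> agents n \<Longrightarrow> c \<in> categories p \<Longrightarrow> A k c = B k c"
  shows "A = B"
proof
  fix k show "A k = B k"
  proof (cases "k \<in> agents n")
    case True
    then have "A k \<in> bundles n p" "B k \<in> bundles n p"
      using assms(1,2) by (auto intro: is_allocation_bundle)
    with True assms(3) show ?thesis unfolding bundles_def by fastforce
  qed (use assms(1,2) in \<open>simp add: is_allocation_def\<close>)
qed

lemma bij_betw_allocation_category:
  assumes "is_allocation n p A" "c \<in> categories p"
  shows "bij_betw (\<lambda>k. A k c) (agents n) {1..n}"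
proof -
  have im: "(\<lambda>k. A k c) ` agents n = {1..n}" using assms unfolding is_allocation_def by auto
  then have "inj_on (\<lambda>k. A k c) (agents n)"
    by (simp add: inj_on_iff_eq_card agents_def)
  with im show ?thesis by (simp add: bij_betw_def)
qed

lemma allocation_relabeling_exists:
  assumes "is_allocation n p A" "is_allocation n p B" "c \<in> categories p"
  obtains M where "bij_betw M {1..n} {1..n}" "\<And>k. k \<in> agents n \<Longrightarrow> M (B k c) = A k c"
proof
  let ?b = "\<lambda>k. B k c"
  have b: "bij_betw ?b (agents n) {1..n}" using bij_betw_allocation_category[OF assms(2,3)] .
  show "bij_betw ((\<lambda>k. A k c) \<circ> inv_into (agents n) ?b) {1..n} {1..n}"
    using bij_betw_trans[OF bij_betw_inv_into[OF b] bij_betw_allocation_category[OF assms(1,3)]] .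
  show "((\<lambda>k. A k c) \<circ> inv_into (agents n) ?b) (B k c) = A k c" if "k \<in> agents n" for k
    using bij_betw_inv_into_left[OF b that] by simp
qed

lemma is_pref_image:
  assumes "is_pref n p R" "bij_betw g (bundles n p) (bundles n p)"
  shows "is_pref n p ((\<lambda>(x, y). (g x, g y)) ` R)"
proof -
  let ?D = "bundles n p" and ?S = "(\<lambda>(x, y). (g x, g y)) ` R"
  have R: "R \<subseteq> ?D \<times> ?D" "\<forall>x\<in>?D. (x, x) \<in> R" "trans R" "antisym R" "total_on ?D R"
    using assms(1) unfolding is_pref_iff by auto
  have inj: "inj_on g ?D" and im: "g ` ?D = ?D" using assms(2) by (auto simp: bij_betw_def)
  have mem: "(g x, g y) \<in> ?S \<longleftrightarrow> (x, y) \<in> R" if "x \<in> ?D" "y \<in> ?D" for x y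
  proof
    assume "(g x, g y) \<in> ?S"
    then obtain u v where uv: "(u, v) \<in> R" "g x = g u" "g y = g v" by auto
    with R(1) have "u \<in> ?D" "v \<in> ?D" by auto
    with uv that inj show "(x, y) \<in> R" by (metis inj_on_def)
  qed auto
  have S_cases: "\<exists>a b. a \<in> ?D \<and> b \<in> ?D \<and> x = g a \<and> y = g b \<and> (a, b) \<in> R"
    if "(x, y) \<in> ?S" for x y
    using that R(1) by auto
  have preimage: "\<exists>a\<in>?D. x = g a" if "x \<in> ?D" for x using that im by auto
  show ?thesis unfolding is_pref_iff
  proof (intro conjI)
    show "?S \<subseteq> ?D \<times> ?D" using R(1) im by auto
    show "\<forall>x\<in>?D. (x, x) \<in> ?S"
    proof
      fix x assume "x \<in> ?D"
      with preimage obtain a where "a \<in> ?D" "x = g a" by blast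
      with R(2) show "(x, x) \<in> ?S" by (auto intro!: image_eqI[where x = "(a, a)"])
    qed
    show "trans ?S"
    proof (rule transI)
      fix x y z assume xy: "(x, y) \<in> ?S" and yz: "(y, z) \<in> ?S"
      from S_cases[OF xy] obtain a b where ab: "a \<in> ?D" "b \<in> ?D" "x = g a" "y = g b" "(a, b) \<in> R"
        by blast
      from S_cases[OF yz] obtain c where c: "c \<in> ?D" "z = g c" by blast
      with ab yz mem have "(b, c) \<in> R" by simp
      with ab R(3) have "(a, c) \<in> R" by (blast dest: transD)
      with ab c show "(x, z) \<in> ?S" by auto
    qed
    show "antisym ?S"
    proof (rule antisymI)
      fix x y assume xy: "(x, y) \<in> ?S" and yx: "(y, x) \<in> ?S"
      from S_cases[OF xy] obtain a b where ab: "a \<in> ?D" "b \<in> ?D" "x = g a" "y = g b" "(a, b) \<in> R"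
        by blast
      with yx mem have "(b, a) \<in> R" by simp
      with ab R(4) show "x = y" by (blast dest: antisymD)
    qed
    show "total_on ?D ?S"
    proof (rule total_onI)
      fix x y assume "x \<in> ?D" "y \<in> ?D" "x \<noteq> y"
      with preimage obtain a b where ab: "a \<in> ?D" "b \<in> ?D" "x = g a" "y = g b" by blast
      with \<open>x \<noteq> y\<close> R(5) have "(a, b) \<in> R \<or> (b, a) \<in> R" by (auto simp: total_on_def)
      with ab mem show "(x, y) \<in> ?S \<or> (y, x) \<in> ?S" by auto
    qed
  qed
qed

lemma bij_betw_perm_bundle:
  assumes "c \<in> categories p" "bij_betw M {1..n} {1..n}"
  shows "bij_betw (perm_bundle c M) (bundles n p) (bundles n p)"
proof -
  have inj: "inj_on M {1..n}" and im: "M ` {1..n} = {1..n}"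
    using assms(2) by (auto simp: bij_betw_def)
  have "inj_on (perm_bundle c M) (bundles n p)"
  proof (rule inj_onI)
    fix d e assume d: "d \<in> bundles n p" and e: "e \<in> bundles n p"
      and eq: "perm_bundle c M d = perm_bundle c M e"
    then have "M (d c) = M (e c)" unfolding perm_bundle_def by (metis fun_upd_same)
    with inj d e assms(1) have "d c = e c" unfolding bundles_def by (auto simp: inj_on_def)
    with eq show "d = e" unfolding perm_bundle_def by (metis fun_upd_triv fun_upd_upd)
  qed
  moreover have "e \<in> perm_bundle c M ` bundles n p" if e: "e \<in> bundles n p" for e
  proof -
    from e assms(1) have "e c \<in> {1..n}" unfolding bundles_def by auto
    with im obtain u where u: "u \<in> {1..n}" "M u = e c" by (metis imageE)
    with e assms(1) have "e(c := u) \<in> bundles n p" unfolding bundles_def by auto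
    moreover have "perm_bundle c M (e(c := u)) = e" unfolding perm_bundle_def using u by auto
    ultimately show ?thesis by (metis imageI)
  qed
  moreover have "perm_bundle c M ` bundles n p \<subseteq> bundles n p"
    using im assms(1) unfolding perm_bundle_def bundles_def by auto
  ultimately show ?thesis unfolding bij_betw_def by blast
qed

lemma is_profile_perm_profile:
  assumes "is_profile n p P" "c \<in> categories p" "bij_betw M {1..n} {1..n}"
  shows "is_profile n p (perm_profile n c M P)"
  using assms is_pref_image[OF _ bij_betw_perm_bundle[OF assms(2,3)]]
  unfolding is_profile_def perm_profile_def perm_pref_def by auto

lemma category_neutral_attains_allocation:
  assumes mech: "is_mechanism n p f" and neu: "category_neutral n p f"
    and P: "is_profile n p P" and A: "is_allocation n p A"
  obtains Q where "is_profile n p Q" "f Q = A"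
proof -
  have "\<exists>Q. is_profile n p Q \<and> (\<forall>k\<in>agents n. \<forall>c\<in>{1..m}. f Q k c = A k c)" if "m \<le> p" for m
    using that
  proof (induction m)
    case 0 with P show ?case by auto
  next
    case (Suc m)
    then obtain Q where Q: "is_profile n p Q" and agree: "\<forall>k\<in>agents n. \<forall>c\<in>{1..m}. f Q k c = A k c"
      by auto
    have c: "Suc m \<in> categories p" using Suc.prems unfolding categories_def by auto
    have fQ: "is_allocation n p (f Q)" using mech Q unfolding is_mechanism_def by blast
    obtain M where M: "bij_betw M {1..n} {1..n}" "\<And>k. k \<in> agents n \<Longrightarrow> M (f Q k (Suc m)) = A k (Suc m)"
      using allocation_relabeling_exists[OF A fQ c] by blast
    have "f (perm_profile n (Suc m) M Q) = perm_alloc n (Suc m) M (f Q)"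
      using neu Q c M(1) unfolding category_neutral_def by blast
    with agree M(2) have "\<forall>k\<in>agents n. \<forall>c\<in>{1..Suc m}. f (perm_profile n (Suc m) M Q) k c = A k c"
      by (auto simp: perm_alloc_def perm_bundle_def le_Suc_eq)
    with is_profile_perm_profile[OF Q c M(1)] show ?case by blast
  qed
  then obtain Q where Q: "is_profile n p Q" and agree: "\<forall>k\<in>agents n. \<forall>c\<in>{1..p}. f Q k c = A k c"
    by blast
  have "f Q = A"
    using mech Q A agree by (intro allocation_eqI) (auto simp: is_mechanism_def categories_def)
  with Q that show thesis by blast
qed

lemma strategy_proof_non_bossy_monotonic:
  assumes sp: "strategy_proof n p f" and nb: "non_bossy n p f"
    and X: "is_profile n p X" and k: "k \<in> agents n" and R: "is_pref n p R"
    and upper: "\<And>x. (f X k, x) \<in> R \<Longrightarrow> (f X k, x) \<in> X k"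
  shows "f (X(k := R)) = f X"
proof -
  let ?X' = "X(k := R)"
  have "(f ?X' k, f X k) \<in> X k"
    using sp X k R unfolding strategy_proof_def weakly_above_def by blast
  moreover have "(f X k, f ?X' k) \<in> R"
    using sp is_profile_upd[OF X k R] k is_profile_pref[OF X k]
    unfolding strategy_proof_def weakly_above_def by (metis fun_upd_same fun_upd_upd fun_upd_triv)
  moreover have "antisym (X k)" using is_profile_pref[OF X k] unfolding is_pref_iff by blast
  ultimately have "f X k = f ?X' k" using upper by (auto dest: antisymD)
  then show ?thesis using nb X k R unfolding non_bossy_def by metis
qed

lemma strategy_proof_non_bossy_monotonic_profile:
  assumes sp: "strategy_proof n p f" and nb: "non_bossy n p f"
    and Q: "is_profile n p Q" and Q': "is_profile n p Q'" and fQ: "f Q = C"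
    and upper: "\<And>k x. k \<in> agents n \<Longrightarrow> (C k, x) \<in> Q' k \<Longrightarrow> (C k, x) \<in> Q k"
  shows "f Q' = C"
proof -
  define H where "H S = (\<lambda>j. if j \<in> S then Q' j else Q j)" for S
  have H_profile: "is_profile n p (H S)" for S
    using Q Q' unfolding is_profile_def H_def by auto
  have "f (H S) = C" if "S \<subseteq> agents n" for S
    using finite_subset[OF that finite_agents] that
  proof (induction S rule: finite_subset_induct)
    case empty
    have "H {} = Q" unfolding H_def by auto
    with fQ show ?case by simp
  next
    case (insert k S)
    have "H (insert k S) = (H S)(k := Q' k)" unfolding H_def by (auto simp: fun_eq_iff)
    moreover have "f ((H S)(k := Q' k)) = f (H S)"
      using insert upper H_profile
      by (intro strategy_proof_non_bossy_monotonic[OF sp nb])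
        (auto simp: H_def intro: is_profile_pref[OF Q'])
    ultimately show ?case using insert.IH by (simp only:)
  qed
  moreover have "H (agents n) = Q'" using Q Q' unfolding H_def is_profile_def by (auto simp: fun_eq_iff)
  ultimately show ?thesis by auto
qed

definition lift_to_top :: "bdl set \<Rightarrow> bdl \<Rightarrow> pref \<Rightarrow> pref" where
  "lift_to_top D a R = {(x, y). (x, y) \<in> R \<and> x \<noteq> a \<and> y \<noteq> a} \<union> {(x, y). x \<in> D \<and> y = a}"

lemma is_pref_lift_to_top:
  assumes "is_pref n p R" "a \<in> bundles n p"
  shows "is_pref n p (lift_to_top (bundles n p) a R)"
  using assms unfolding is_pref_iff lift_to_top_def trans_def antisym_def total_on_def
  by (intro conjI; blast)

lemma lift_to_top_top: "(a, x) \<in> lift_to_top D a R \<Longrightarrow> x = a"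
  unfolding lift_to_top_def by auto

lemma lift_to_top_upper: "(b, a) \<in> R \<Longrightarrow> (b, x) \<in> lift_to_top D a R \<Longrightarrow> (b, x) \<in> R"
  unfolding lift_to_top_def by auto

theorem lemma3:
  fixes n p :: nat and f :: mechanism
  assumes "p \<ge> 2"
    and mech: "is_mechanism n p f"
    and sp: "strategy_proof n p f"
    and nb: "non_bossy n p f"
    and neu: "category_neutral n p f"
  shows "pareto_optimal n p f"
  unfolding pareto_optimal_def
proof (intro allI impI notI)
  fix P assume P: "is_profile n p P"
  assume "\<exists>A. is_allocation n p A \<and> (\<forall>j\<in>agents n. weakly_above (P j) (A j) (f P j))
              \<and> (\<exists>j\<in>agents n. strictly_above (P j) (A j) (f P j))"
  then obtain A where A: "is_allocation n p A" and dom: "\<forall>j\<in>agents n. (f P j, A j) \<in> P j"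
    and improved: "\<exists>j\<in>agents n. A j \<noteq> f P j"
    unfolding weakly_above_def strictly_above_def by blast
  define P' where "P' = (\<lambda>j. if j \<in> agents n then lift_to_top (bundles n p) (A j) (P j) else P j)"
  have P': "is_profile n p P'"
    using P is_allocation_bundle[OF A] is_pref_lift_to_top unfolding is_profile_def P'_def by auto
  have "f P' = f P"
    using dom lift_to_top_upper
    by (intro strategy_proof_non_bossy_monotonic_profile[OF sp nb P P']) (auto simp: P'_def)
  moreover obtain Q where Q: "is_profile n p Q" "f Q = A"
    using category_neutral_attains_allocation[OF mech neu P A] .
  have "f P' = A"
    using Q is_allocation_bundle[OF A] lift_to_top_top
    by (intro strategy_proof_non_bossy_monotonic_profile[OF sp nb Q(1) P' Q(2)])
      (fastforce simp: P'_def dest: is_profile_pref is_pref_iff[THEN iffD1])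
  ultimately show False using improved by auto
qed

end
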